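(* Let $A$ and $B$ be automata with $A\le_{*T}B$. Then (1) there exist automata $C,D$ with $A\le_H C$, $C\le_P D$ and $D\le_R B$; (2) if moreover $B$ has finite invisible nondeterminism, then there exist automata $C,D$ with $A\le_H C$, $C\le_{iP} D$ and $D\le_R B$.
   Context: An automaton $A$ consists of a set $\mathrm{states}(A)$ of states, a nonempty set $\mathrm{start}(A)\subseteq\mathrm{states}(A)$ of start states, a set $\mathrm{acts}(A)$ of actions containing a distinguished internal action $\tau$, and a set $\mathrm{steps}(A)\subseteq\mathrm{states}(A)\times\mathrm{acts}(A)\times\mathrm{states}(A)$ of steps; write $s\xrightarrow{a}_A t$ for $(s,a,t)\in\mathrm{steps}(A)$. An execution fragment of $A$ is a finite or infinite alternating sequence $s_0a_1s_1a_2s_2\cdots$ of states and actions, beginning with a state and, if finite, ending with a state, such that $s_{i-1}\xrightarrow{a_i}_A s_i$ for all $i>0$. An execution is an execution fragment whose first state is a start state. The trace of an execution fragment is the subsequence of its non-$\tau$ actions; a trace of $A$ is the trace of some execution of $A$, and $\mathrm{traces}^*(A)$ is the set of finite traces of $A$. $A\le_{*T}B$ means $\mathrm{traces}^*(A)\subseteq\mathrm{traces}^*(B)$. For states $s,t$ and a finite sequence $\beta$ of non-$\tau$ actions, write $s\stackrel{\beta}{\Rightarrow}_A t$ if $A$ has a finite execution fragment starting in $s$, with trace $\beta$, ending in $t$. $A$ has finite invisible nondeterminism if $\mathrm{start}(A)$ is finite and for every state $s$ and finite sequence $\beta$ of non-$\tau$ actions there are only finitely many $t$ with $s\stackrel{\beta}{\Rightarrow}_A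 t$. For a relation $R$ write $R[s]=\{u\mid (s,u)\in R\}$; $R$ is image-finite if every $R[s]$ is finite. A step refinement from $A$ to $B$ is a partial function $r:\mathrm{states}(A)\rightharpoonup\mathrm{states}(B)$ such that (1) if $s\in\mathrm{start}(A)$ then $s\in\mathrm{dom}(r)$ and $r(s)\in\mathrm{start}(B)$; (2) if $s\xrightarrow{a}_A t$ and $s\in\mathrm{dom}(r)$ then $t\in\mathrm{dom}(r)$ and either $r(s)=r(t)$ and $a=\tau$, or $r(s)\xrightarrow{a}_B r(t)$. Write $A\le_R B$ if one exists. A normed forward simulation from $A$ to $B$ is a pair $(f,n)$ where $f\subseteq\mathrm{states}(A)\times\mathrm{states}(B)$ and $n:\mathrm{steps}(A)\times\mathrm{states}(B)\to S$ for some set $S$ with a well-founded strict order $<$, such that: (1) if $s\in\mathrm{start}(A)$ then $f[s]\cap\mathrm{start}(B)\neq\emptyset$; (2) if $s\xrightarrow{a}_A t$ and $u\in f[s]$ then (a) $u\in f[t]$ and $a=\tau$, or (b) there is $v\in f[t]$ with $u\xrightarrow{a}_B v$, or (c) there is $v\in f[s]$ with $u\xrightarrow{\tau}_B v$ and $n(s\xrightarrow{a}t,v)<n(s\xrightarrow{a}t,u)$. A normed backward simulation from $A$ to $B$ is a pair $(b,n)$ where $b\subseteq\mathrm{states}(A)\times\mathrm{states}(B)$ is total (every $s\in\mathrm{states}(A)$ has $b[s]\neq\emptyset$) and $n:(\mathrm{steps}(A)\cup\mathrm{start}(A))\times\mathrm{states}(B)\to S$ for some set $S$ with a well-founded strict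 order $<$, such that: (1) if $s\in\mathrm{start}(A)$ and $u\in b[s]$ then (a) $u\in\mathrm{start}(B)$, or (b) there is $v\in b[s]$ with $v\xrightarrow{\tau}_B u$ and $n(s,v)<n(s,u)$; (2) if $t\xrightarrow{a}_A s$ and $u\in b[s]$ then (a) $u\in b[t]$ and $a=\tau$, or (b) there is $v\in b[t]$ with $v\xrightarrow{a}_B u$, or (c) there is $v\in b[s]$ with $v\xrightarrow{\tau}_B u$ and $n(t\xrightarrow{a}s,v)<n(t\xrightarrow{a}s,u)$. A normed history relation from $A$ to $B$ is a pair $(r,n)$ such that $r$ is a step refinement from $B$ to $A$ and $(r^{-1},n)$ is a normed forward simulation from $A$ to $B$; write $A\le_H B$ if one exists. A normed prophecy relation from $A$ to $B$ is a pair $(r,n)$ such that $r$ is a step refinement from $B$ to $A$ and $(r^{-1},n)$ is a normed backward simulation from $A$ to $B$; write $A\le_P B$ if one exists, and $A\le_{iP}B$ if one exists with $r^{-1}$ image-finite. *)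

theory Defs
  imports Main
begin

datatype 'a act = Tau | Ext 'a

record ('s, 'a) automaton =
  states :: "'s set"
  start  :: "'s set"
  acts   :: "'a act set"
  steps  :: "('s \<times> 'a act \<times> 's) set"

definition is_automaton :: "('s, 'a) automaton \<Rightarrow> bool" where
  "is_automaton A \<longleftrightarrow>
     start A \<noteq> {} \<and> start A \<subseteq> states A \<and> Tau \<in> acts A \<and>
     steps A \<subseteq> states A \<times> acts A \<times> states A"

text \<open>A finite execution fragment s0 a1 s1 ... an sn is represented by its first
  state s0 and the list [(a1,s1),...,(an,sn)].\<close>
fun exec_frag :: "('s, 'a) automaton \<Rightarrow> 's \<Rightarrow> ('a act \<times> 's) list \<Rightarrow> bool" where
  "exec_frag A s [] \<longleftrightarrow> s \<in> states A"
| "exec_frag A s ((a, t) # xs) \<longleftrightarrow> (s, a, t) \<in> steps A \<and> exec_frag A t xs"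

fun last_state :: "'s \<Rightarrow> ('a act \<times> 's) list \<Rightarrow> 's" where
  "last_state s [] = s"
| "last_state s ((a, t) # xs) = last_state t xs"

fun trace :: "('a act \<times> 's) list \<Rightarrow> 'a list" where
  "trace [] = []"
| "trace ((Tau, t) # xs) = trace xs"
| "trace ((Ext a, t) # xs) = a # trace xs"

definition traces_star :: "('s, 'a) automaton \<Rightarrow> 'a list set" where
  "traces_star A = {trace xs | s xs. s \<in> start A \<and> exec_frag A s xs}"

definition trace_incl :: "('s, 'a) automaton \<Rightarrow> ('t, 'a) automaton \<Rightarrow> bool" where
  "trace_incl A B \<longleftrightarrow> traces_star A \<subseteq> traces_star B"

definition wstep :: "('s, 'a) automaton \<Rightarrow> 's \<Rightarrow> 'a list \<Rightarrow> 's \<Rightarrow> bool" where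
  "wstep A s \<beta> t \<longleftrightarrow> (\<exists>xs. exec_frag A s xs \<and> trace xs = \<beta> \<and> last_state s xs = t)"

definition fin_invis_nondet :: "('s, 'a) automaton \<Rightarrow> bool" where
  "fin_invis_nondet A \<longleftrightarrow> finite (start A) \<and>
     (\<forall>s \<in> states A. \<forall>\<beta>. finite {t. wstep A s \<beta> t})"

definition image_finite :: "('s \<times> 't) set \<Rightarrow> bool" where
  "image_finite R \<longleftrightarrow> (\<forall>s. finite (R `` {s}))"

definition step_refinement ::
  "('s, 'a) automaton \<Rightarrow> ('t, 'a) automaton \<Rightarrow> ('s \<Rightarrow> 't option) \<Rightarrow> bool" where
  "step_refinement A B r \<longleftrightarrow>
     dom r \<subseteq> states A \<and> ran r \<subseteq> states B \<and>
     (\<forall>s \<in> start A. s \<in> dom r \<and> the (r s) \<in> start B) \<and>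
     (\<forall>s a t. (s, a, t) \<in> steps A \<and> s \<in> dom r \<longrightarrow>
        t \<in> dom r \<and>
        ((r s = r t \<and> a = Tau) \<or> (the (r s), a, the (r t)) \<in> steps B))"

definition le_R :: "('s, 'a) automaton \<Rightarrow> ('t, 'a) automaton \<Rightarrow> bool" where
  "le_R A B \<longleftrightarrow> (\<exists>r. step_refinement A B r)"

definition inv_rel :: "('s \<Rightarrow> 't option) \<Rightarrow> ('t \<times> 's) set" where
  "inv_rel r = {(u, s). r s = Some u}"

definition wf_strict :: "('o \<times> 'o) set \<Rightarrow> bool" where
  "wf_strict lt \<longleftrightarrow> wf lt \<and> trans lt"

definition normed_fwd_sim ::
  "('s, 'a) automaton \<Rightarrow> ('t, 'a) automaton \<Rightarrow> ('s \<times> 't) set \<Rightarrow>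
   (('s \<times> 'a act \<times> 's) \<Rightarrow> 't \<Rightarrow> 'o) \<Rightarrow> ('o \<times> 'o) set \<Rightarrow> bool" where
  "normed_fwd_sim A B f n lt \<longleftrightarrow>
     f \<subseteq> states A \<times> states B \<and> wf_strict lt \<and>
     (\<forall>s \<in> start A. f `` {s} \<inter> start B \<noteq> {}) \<and>
     (\<forall>s a t u. (s, a, t) \<in> steps A \<and> u \<in> f `` {s} \<longrightarrow>
        (u \<in> f `` {t} \<and> a = Tau) \<or>
        (\<exists>v \<in> f `` {t}. (u, a, v) \<in> steps B) \<or>
        (\<exists>v \<in> f `` {s}. (u, Tau, v) \<in> steps B \<and> (n (s, a, t) v, n (s, a, t) u) \<in> lt))"

text \<open>For backward simulations the norm is defined on (steps(A) \<union> start(A)) \<times> states(B);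
  the disjoint union is modelled by the sum type (Inl for steps, Inr for start states).\<close>
definition normed_bwd_sim ::
  "('s, 'a) automaton \<Rightarrow> ('t, 'a) automaton \<Rightarrow> ('s \<times> 't) set \<Rightarrow>
   (('s \<times> 'a act \<times> 's) + 's \<Rightarrow> 't \<Rightarrow> 'o) \<Rightarrow> ('o \<times> 'o) set \<Rightarrow> bool" where
  "normed_bwd_sim A B b n lt \<longleftrightarrow>
     b \<subseteq> states A \<times> states B \<and> wf_strict lt \<and>
     (\<forall>s \<in> states A. b `` {s} \<noteq> {}) \<and>
     (\<forall>s \<in> start A. \<forall>u \<in> b `` {s}.
        u \<in> start B \<or>
        (\<exists>v \<in> b `` {s}. (v, Tau, u) \<in> steps B \<and> (n (Inr s) v, n (Inr s) u) \<in> lt)) \<and>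
     (\<forall>t a s u. (t, a, s) \<in> steps A \<and> u \<in> b `` {s} \<longrightarrow>
        (u \<in> b `` {t} \<and> a = Tau) \<or>
        (\<exists>v \<in> b `` {t}. (v, a, u) \<in> steps B) \<or>
        (\<exists>v \<in> b `` {s}. (v, Tau, u) \<in> steps B \<and>
                         (n (Inl (t, a, s)) v, n (Inl (t, a, s)) u) \<in> lt))"

text \<open>The ordered set S of norm values is existentially quantified. Without loss of
  generality S is taken to be the domain of the norm (pulling back the order along n
  preserves well-foundedness and transitivity), which fixes its type.\<close>
definition le_H :: "('s, 'a) automaton \<Rightarrow> ('t, 'a) automaton \<Rightarrow> bool" where
  "le_H A B \<longleftrightarrow> (\<exists>r (n :: ('s \<times> 'a act \<times> 's) \<Rightarrow> 't \<Rightarrow> ('s \<times> 'a act \<times> 's) \<times> 't) lt.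
      step_refinement B A r \<and> normed_fwd_sim A B (inv_rel r) n lt)"

definition le_P :: "('s, 'a) automaton \<Rightarrow> ('t, 'a) automaton \<Rightarrow> bool" where
  "le_P A B \<longleftrightarrow> (\<exists>r (n :: ('s \<times> 'a act \<times> 's) + 's \<Rightarrow> 't \<Rightarrow> (('s \<times> 'a act \<times> 's) + 's) \<times> 't) lt.
      step_refinement B A r \<and> normed_bwd_sim A B (inv_rel r) n lt)"

definition le_iP :: "('s, 'a) automaton \<Rightarrow> ('t, 'a) automaton \<Rightarrow> bool" where
  "le_iP A B \<longleftrightarrow> (\<exists>r (n :: ('s \<times> 'a act \<times> 's) + 's \<Rightarrow> 't \<Rightarrow> (('s \<times> 'a act \<times> 's) + 's) \<times> 't) lt.
      step_refinement B A r \<and> normed_bwd_sim A B (inv_rel r) n lt \<and>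
      image_finite (inv_rel r))"

text \<open>State type used for the intermediate automata C and D.\<close>
type_synonym ('sa, 'sb, 'a) big_state = "('sa + 'sb + 'a act + nat) list set"

end

theory Submission
  imports Defs
begin

text \<open>
  The history automaton C of A records in each state the trace performed so far; every step
  of A extends the recorded trace, so the inverse of the projection C \<rightarrow> A is a history
  relation. The automaton D pairs a state (s, \<beta>) of C with a state u of B reached by \<beta>,
  moving A and B together on visible actions and separately on internal ones. The projection
  D \<rightarrow> B is a step refinement, and the inverse of the projection D \<rightarrow> C is a prophecy relation:
  it is total by trace inclusion, and going backwards along a step of C, a state u reached
  by \<beta> either was entered by the last visible step of \<beta> or has an internal predecessor reached
  by \<beta> that is closer to such an entry state. This distance is the norm. If B has finite
  invisible nondeterminism, only finitely many u are reached by a given \<beta>, so the prophecy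
  relation is image-finite. Injective renamings of states preserve all these relations.
\<close>

section \<open>Reachability along a trace\<close>

fun act_trace :: "'a act \<Rightarrow> 'a list" where
  "act_trace Tau = []"
| "act_trace (Ext x) = [x]"

lemma trace_Cons: "trace ((a, t) # xs) = act_trace a @ trace xs"
  by (cases a) auto

lemma trace_append: "trace (xs @ ys) = trace xs @ trace ys"
  by (induction xs rule: trace.induct) auto

lemma last_state_append: "last_state s (xs @ ys) = last_state (last_state s xs) ys"
  by (induction xs arbitrary: s) auto

lemma exec_frag_snocI:
  "exec_frag X s xs \<Longrightarrow> (last_state s xs, a, t) \<in> steps X \<Longrightarrow> t \<in> states X \<Longrightarrow>
   exec_frag X s (xs @ [(a, t)])"
  by (induction xs arbitrary: s) auto

inductive reachable :: "('s, 'a) automaton \<Rightarrow> 'a list \<Rightarrow> 's \<Rightarrow> bool" for X where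
  start: "s \<in> start X \<Longrightarrow> reachable X [] s"
| step: "reachable X \<beta> s \<Longrightarrow> (s, a, t) \<in> steps X \<Longrightarrow> reachable X (\<beta> @ act_trace a) t"

lemma reachable_tau: "reachable X \<beta> s \<Longrightarrow> (s, Tau, t) \<in> steps X \<Longrightarrow> reachable X \<beta> t"
  using reachable.step[of X \<beta> s Tau t] by simp

lemma reachable_ext: "reachable X \<beta> s \<Longrightarrow> (s, Ext x, t) \<in> steps X \<Longrightarrow> reachable X (\<beta> @ [x]) t"
  using reachable.step[of X \<beta> s "Ext x" t] by simp

lemma reachable_exec_frag:
  "reachable X \<beta> s \<Longrightarrow> exec_frag X s xs \<Longrightarrow> reachable X (\<beta> @ trace xs) (last_state s xs)"
proof (induction xs arbitrary: \<beta> s)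
  case (Cons p xs)
  obtain a t where "p = (a, t)" by fastforce
  with Cons.prems have "reachable X (\<beta> @ act_trace a) t" "exec_frag X t xs"
    by (auto intro: reachable.step)
  with \<open>p = (a, t)\<close> show ?case
    using Cons.IH[of "\<beta> @ act_trace a" t] by (simp add: trace_Cons)
qed simp

lemma reachable_iff_wstep:
  assumes "is_automaton X"
  shows "reachable X \<beta> s \<longleftrightarrow> (\<exists>s0 \<in> start X. wstep X s0 \<beta> s)"
proof
  assume "reachable X \<beta> s"
  then show "\<exists>s0 \<in> start X. wstep X s0 \<beta> s"
  proof (induction rule: reachable.induct)
    case (start s)
    then have "exec_frag X s []" using assms by (auto simp: is_automaton_def)
    with start show ?case unfolding wstep_def by (intro bexI[of _ s] exI[of _ "[]"]) auto
  next
    case (step \<beta> s a t)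
    then obtain s0 xs where "s0 \<in> start X" "exec_frag X s0 xs" "trace xs = \<beta>" "last_state s0 xs = s"
      unfolding wstep_def by blast
    moreover have "t \<in> states X" using step.hyps(2) assms by (auto simp: is_automaton_def)
    ultimately show ?case using step.hyps(2) unfolding wstep_def
      by (intro bexI[of _ s0] exI[of _ "xs @ [(a, t)]"])
         (auto intro: exec_frag_snocI simp: trace_append last_state_append trace_Cons)
  qed
next
  assume "\<exists>s0 \<in> start X. wstep X s0 \<beta> s"
  then show "reachable X \<beta> s"
    unfolding wstep_def using reachable_exec_frag[OF reachable.start] by fastforce
qed

lemma traces_star_iff_reachable:
  "is_automaton X \<Longrightarrow> \<beta> \<in> traces_star X \<longleftrightarrow> (\<exists>s. reachable X \<beta> s)"
  by (auto simp: reachable_iff_wstep traces_star_def wstep_def)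

lemma reachable_in_states: "reachable X \<beta> s \<Longrightarrow> is_automaton X \<Longrightarrow> s \<in> states X"
  by (induction rule: reachable.induct) (auto simp: is_automaton_def)

lemma finite_reachable:
  assumes "is_automaton X" "fin_invis_nondet X"
  shows "finite {s. reachable X \<beta> s}"
proof -
  have "{s. reachable X \<beta> s} = (\<Union>s0 \<in> start X. {s. wstep X s0 \<beta> s})"
    using reachable_iff_wstep[OF assms(1)] by blast
  also have "finite \<dots>"
    using assms unfolding is_automaton_def fin_invis_nondet_def by blast
  finally show ?thesis .
qed

definition tau_step :: "('s, 'a) automaton \<Rightarrow> 's \<Rightarrow> 's \<Rightarrow> bool" where
  "tau_step X s t \<longleftrightarrow> (s, Tau, t) \<in> steps X"

definition entry_states :: "('s, 'a) automaton \<Rightarrow> 'a list \<Rightarrow> 's set" where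
  "entry_states X \<beta> = {t. (\<beta> = [] \<and> t \<in> start X) \<or>
     (\<exists>\<beta>' x s. \<beta> = \<beta>' @ [x] \<and> reachable X \<beta>' s \<and> (s, Ext x, t) \<in> steps X)}"

definition tau_depth :: "('s, 'a) automaton \<Rightarrow> 'a list \<Rightarrow> 's \<Rightarrow> nat" where
  "tau_depth X \<beta> t = (LEAST k. \<exists>s \<in> entry_states X \<beta>. (tau_step X ^^ k) s t)"

lemma entry_states_Nil [simp]: "entry_states X [] = start X"
  by (simp add: entry_states_def)

lemma entry_states_snoc [simp]:
  "entry_states X (\<beta> @ [x]) = {t. \<exists>s. reachable X \<beta> s \<and> (s, Ext x, t) \<in> steps X}"
  by (auto simp: entry_states_def)

lemma entry_states_reachable: "t \<in> entry_states X \<beta> \<Longrightarrow> reachable X \<beta> t"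
  by (auto simp: entry_states_def intro: reachable.start reachable_ext)

lemma reachable_tau_steps: "(tau_step X ^^ k) s t \<Longrightarrow> reachable X \<beta> s \<Longrightarrow> reachable X \<beta> t"
proof (induction k arbitrary: t)
  case (Suc k)
  then obtain s' where "(tau_step X ^^ k) s s'" "tau_step X s' t" by auto
  with Suc show ?case unfolding tau_step_def by (blast intro: reachable_tau)
qed simp

lemma reachable_from_entry_states:
  "reachable X \<beta> t \<Longrightarrow> \<exists>k. \<exists>s \<in> entry_states X \<beta>. (tau_step X ^^ k) s t"
proof (induction rule: reachable.induct)
  case (start s)
  then show ?case by (intro exI[of _ 0]) auto
next
  case (step \<beta> s a t)
  show ?case
  proof (cases a)
    case Tau
    with step obtain k s0 where "s0 \<in> entry_states X \<beta>" "(tau_step X ^^ k) s0 s" by auto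
    moreover have "tau_step X s t" using step.hyps(2) Tau by (simp add: tau_step_def)
    ultimately show ?thesis using Tau by (auto intro: relpowp_Suc_I)
  next
    case (Ext x)
    with step.hyps show ?thesis by (intro exI[of _ 0]) auto
  qed
qed

lemma reachable_tau_predecessor:
  assumes "reachable X \<beta> t"
  shows "t \<in> entry_states X \<beta> \<or>
    (\<exists>s. reachable X \<beta> s \<and> (s, Tau, t) \<in> steps X \<and> tau_depth X \<beta> s < tau_depth X \<beta> t)"
proof -
  obtain s0 where s0: "s0 \<in> entry_states X \<beta>" "(tau_step X ^^ tau_depth X \<beta> t) s0 t"
    using LeastI_ex[OF reachable_from_entry_states[OF assms]] unfolding tau_depth_def by blast
  show ?thesis
  proof (cases "tau_depth X \<beta> t")
    case 0
    with s0 show ?thesis by simp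
  next
    case (Suc k)
    with s0(2) obtain s where s: "(tau_step X ^^ k) s0 s" "tau_step X s t" by auto
    have "tau_depth X \<beta> s \<le> k"
      unfolding tau_depth_def using s(1) s0(1) by (blast intro: Least_le)
    moreover have "reachable X \<beta> s"
      using s(1) entry_states_reachable[OF s0(1)] by (rule reachable_tau_steps)
    ultimately show ?thesis using s(2) Suc by (auto simp: tau_step_def)
  qed
qed

section \<open>Projections and renamings of automata\<close>

definition projection :: "('s, 'a) automaton \<Rightarrow> ('s \<Rightarrow> 't) \<Rightarrow> 's \<Rightarrow> 't option" where
  "projection X f = (Some \<circ> f) |` states X"

lemma projection_apply: "projection X f x = (if x \<in> states X then Some (f x) else None)"
  by (simp add: projection_def restrict_map_def)

lemma step_refinement_projection:
  assumes "is_automaton X"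
    and "f ` states X \<subseteq> states Y" and "f ` start X \<subseteq> start Y"
    and "\<And>x a y. (x, a, y) \<in> steps X \<Longrightarrow> (f x = f y \<and> a = Tau) \<or> (f x, a, f y) \<in> steps Y"
  shows "step_refinement X Y (projection X f)"
  unfolding step_refinement_def
proof (intro conjI allI ballI impI)
  show "dom (projection X f) \<subseteq> states X" "ran (projection X f) \<subseteq> states Y"
    using assms(2) by (auto simp: dom_def ran_def projection_apply split: if_splits)
next
  fix x assume "x \<in> start X"
  with assms(1,3) show "x \<in> dom (projection X f)" "the (projection X f x) \<in> start Y"
    by (auto simp: is_automaton_def projection_apply)
next
  fix x a y assume "(x, a, y) \<in> steps X \<and> x \<in> dom (projection X f)"
  with assms(1) assms(4)[of x a y] show "y \<in> dom (projection X f)"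
    "projection X f x = projection X f y \<and> a = Tau \<or>
     (the (projection X f x), a, the (projection X f y)) \<in> steps Y"
    by (auto simp: is_automaton_def projection_apply)
qed

lemma inv_rel_projection_iff: "(y, x) \<in> inv_rel (projection X f) \<longleftrightarrow> x \<in> states X \<and> y = f x"
  by (auto simp: inv_rel_def projection_apply)

definition rename_states :: "('s \<Rightarrow> 't) \<Rightarrow> ('s, 'a) automaton \<Rightarrow> ('t, 'a) automaton" where
  "rename_states h X = \<lparr>states = h ` states X, start = h ` start X, acts = acts X,
     steps = (\<lambda>(x, a, y). (h x, a, h y)) ` steps X\<rparr>"

lemma rename_states_simps [simp]:
  "states (rename_states h X) = h ` states X"
  "start (rename_states h X) = h ` start X"
  "acts (rename_states h X) = acts X"
  by (simp_all add: rename_states_def)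

lemma steps_rename_states: "steps (rename_states h X) = (\<lambda>(x, a, y). (h x, a, h y)) ` steps X"
  by (simp add: rename_states_def)

lemma rename_states_id [simp]: "rename_states id X = X"
  by (simp add: rename_states_def)

lemma is_automaton_rename_states: "is_automaton X \<Longrightarrow> is_automaton (rename_states h X)"
  unfolding is_automaton_def steps_rename_states by auto

lemma steps_rename_statesE:
  assumes "(x', a, y') \<in> steps (rename_states h X)"
  obtains x y where "x' = h x" "y' = h y" "(x, a, y) \<in> steps X"
  using assms by (auto simp: steps_rename_states)

lemma steps_rename_states_iff:
  "inj h \<Longrightarrow> (h x, a, h y) \<in> steps (rename_states h X) \<longleftrightarrow> (x, a, y) \<in> steps X"
  by (force simp: steps_rename_states inj_eq)

lemma Image_map_prod: "inj h \<Longrightarrow> (map_prod h g ` R) `` {h x} = g ` (R `` {x})"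
  by (auto simp: inj_eq)

definition rename_map :: "('s \<Rightarrow> 's') \<Rightarrow> ('t \<Rightarrow> 't') \<Rightarrow> ('s \<Rightarrow> 't option) \<Rightarrow> 's' \<Rightarrow> 't' option" where
  "rename_map h g r = (map_option g \<circ> r \<circ> inv h) |` range h"

lemma rename_map_apply [simp]: "inj h \<Longrightarrow> rename_map h g r (h x) = map_option g (r x)"
  by (simp add: rename_map_def)

lemma rename_map_eq_Some:
  "inj h \<Longrightarrow> rename_map h g r z = Some v \<longleftrightarrow> (\<exists>x u. z = h x \<and> r x = Some u \<and> v = g u)"
  by (auto simp: rename_map_def restrict_map_def)

lemma inv_rel_rename_map: "inj h \<Longrightarrow> inv_rel (rename_map h g r) = map_prod g h ` inv_rel r"
  by (auto simp: inv_rel_def rename_map_eq_Some)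

lemma step_refinement_rename:
  assumes "step_refinement X Y r" "inj h" "inj g"
  shows "step_refinement (rename_states h X) (rename_states g Y) (rename_map h g r)"
  unfolding step_refinement_def
proof (intro conjI allI ballI impI)
  show "dom (rename_map h g r) \<subseteq> states (rename_states h X)"
       "ran (rename_map h g r) \<subseteq> states (rename_states g Y)"
    using assms by (auto simp: step_refinement_def dom_def ran_def rename_map_eq_Some)
next
  fix x' assume "x' \<in> start (rename_states h X)"
  with assms show "x' \<in> dom (rename_map h g r)"
    "the (rename_map h g r x') \<in> start (rename_states g Y)"
    by (auto simp: step_refinement_def)
next
  fix x' a y' assume step: "(x', a, y') \<in> steps (rename_states h X) \<and> x' \<in> dom (rename_map h g r)"
  then obtain x y where xy: "x' = h x" "y' = h y" "(x, a, y) \<in> steps X"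
    by (auto elim: steps_rename_statesE)
  with step assms(2) have "x \<in> dom r" by (auto simp: dom_def rename_map_eq_Some inj_eq)
  with assms(1) xy(3) have "y \<in> dom r \<and> (r x = r y \<and> a = Tau \<or> (the (r x), a, the (r y)) \<in> steps Y)"
    unfolding step_refinement_def by blast
  with xy assms(2,3) \<open>x \<in> dom r\<close>
  show "y' \<in> dom (rename_map h g r)"
    "rename_map h g r x' = rename_map h g r y' \<and> a = Tau \<or>
     (the (rename_map h g r x'), a, the (rename_map h g r y')) \<in> steps (rename_states g Y)"
    by (auto simp: steps_rename_states_iff)
qed

lemma steps_rename_statesI: "(x, a, y) \<in> steps X \<Longrightarrow> (h x, a, h y) \<in> steps (rename_states h X)"
  by (force simp: steps_rename_states)

lemma normed_fwd_sim_rename: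
  assumes sim: "normed_fwd_sim X Y f n lt" and h: "inj h" and g: "inj g"
  shows "\<exists>n'. normed_fwd_sim (rename_states h X) (rename_states g Y) (map_prod h g ` f) n' lt"
proof -
  define n' where "n' = (\<lambda>(x, a, y) z. n (inv h x, a, inv h y) (inv g z))"
  have n': "n' (h x, a, h y) (g v) = n (x, a, y) v" for x a y v
    using h g by (simp add: n'_def)
  have "normed_fwd_sim (rename_states h X) (rename_states g Y) (map_prod h g ` f) n' lt"
    unfolding normed_fwd_sim_def
  proof (intro conjI allI ballI impI)
    show "map_prod h g ` f \<subseteq> states (rename_states h X) \<times> states (rename_states g Y)" "wf_strict lt"
      using sim by (auto simp: normed_fwd_sim_def)
  next
    fix x' assume "x' \<in> start (rename_states h X)"
    then obtain x where "x' = h x" "x \<in> start X" by auto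
    moreover from this sim obtain u where "u \<in> f `` {x} \<inter> start Y"
      unfolding normed_fwd_sim_def by blast
    ultimately show "(map_prod h g ` f) `` {x'} \<inter> start (rename_states g Y) \<noteq> {}"
      using h by (auto simp: Image_map_prod)
  next
    fix x' a y' u'
    assume step: "(x', a, y') \<in> steps (rename_states h X) \<and> u' \<in> (map_prod h g ` f) `` {x'}"
    then obtain x y where xy: "x' = h x" "y' = h y" "(x, a, y) \<in> steps X"
      by (auto elim: steps_rename_statesE)
    with step h obtain u where u: "u' = g u" "u \<in> f `` {x}"
      by (auto simp: Image_map_prod)
    with sim xy(3) have "(u \<in> f `` {y} \<and> a = Tau) \<or> (\<exists>v \<in> f `` {y}. (u, a, v) \<in> steps Y) \<or>
        (\<exists>v \<in> f `` {x}. (u, Tau, v) \<in> steps Y \<and> (n (x, a, y) v, n (x, a, y) u) \<in> lt)"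
      unfolding normed_fwd_sim_def by blast
    then show "u' \<in> (map_prod h g ` f) `` {y'} \<and> a = Tau \<or>
      (\<exists>v \<in> (map_prod h g ` f) `` {y'}. (u', a, v) \<in> steps (rename_states g Y)) \<or>
      (\<exists>v \<in> (map_prod h g ` f) `` {x'}. (u', Tau, v) \<in> steps (rename_states g Y) \<and>
         (n' (x', a, y') v, n' (x', a, y') u') \<in> lt)"
    proof (elim disjE conjE bexE)
      fix v assume "v \<in> f `` {x}" "(u, Tau, v) \<in> steps Y" "(n (x, a, y) v, n (x, a, y) u) \<in> lt"
      then show ?thesis
        by (intro disjI2 bexI[of _ "g v"] conjI)
          (simp_all add: n' map_prod_imageI steps_rename_statesI xy u)
    qed (use xy u in \<open>blast intro: steps_rename_statesI\<close>)+
  qed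
  then show ?thesis by blast
qed

lemma normed_bwd_sim_rename:
  assumes sim: "normed_bwd_sim X Y b n lt" and h: "inj h" and g: "inj g"
  shows "\<exists>n'. normed_bwd_sim (rename_states h X) (rename_states g Y) (map_prod h g ` b) n' lt"
proof -
  define n' where
    "n' = (\<lambda>p z. n (map_sum (\<lambda>(x, a, y). (inv h x, a, inv h y)) (inv h) p) (inv g z))"
  have n': "n' (Inl (h x, a, h y)) (g v) = n (Inl (x, a, y)) v" "n' (Inr (h x)) (g v) = n (Inr x) v"
    for x a y v
    using h g by (simp_all add: n'_def)
  have "normed_bwd_sim (rename_states h X) (rename_states g Y) (map_prod h g ` b) n' lt"
    unfolding normed_bwd_sim_def
  proof (intro conjI allI ballI impI)
    show "map_prod h g ` b \<subseteq> states (rename_states h X) \<times> states (rename_states g Y)" "wf_strict lt"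
      using sim by (auto simp: normed_bwd_sim_def)
  next
    fix x' assume "x' \<in> states (rename_states h X)"
    with sim h show "(map_prod h g ` b) `` {x'} \<noteq> {}"
      by (auto simp: normed_bwd_sim_def Image_map_prod)
  next
    fix x' u' assume x': "x' \<in> start (rename_states h X)" and u': "u' \<in> (map_prod h g ` b) `` {x'}"
    then obtain x where x: "x' = h x" "x \<in> start X" by auto
    with u' h obtain u where u: "u' = g u" "u \<in> b `` {x}"
      by (auto simp: Image_map_prod)
    with x sim have "u \<in> start Y \<or>
        (\<exists>v \<in> b `` {x}. (v, Tau, u) \<in> steps Y \<and> (n (Inr x) v, n (Inr x) u) \<in> lt)"
      unfolding normed_bwd_sim_def by blast
    then show "u' \<in> start (rename_states g Y) \<or>
      (\<exists>v \<in> (map_prod h g ` b) `` {x'}. (v, Tau, u') \<in> steps (rename_states g Y) \<and>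
        (n' (Inr x') v, n' (Inr x') u') \<in> lt)"
    proof (elim disjE conjE bexE)
      fix v assume "v \<in> b `` {x}" "(v, Tau, u) \<in> steps Y" "(n (Inr x) v, n (Inr x) u) \<in> lt"
      then show ?thesis
        by (intro disjI2 bexI[of _ "g v"] conjI)
          (simp_all add: n' map_prod_imageI steps_rename_statesI x u)
    qed (simp add: x u)
  next
    fix x' a y' u'
    assume step: "(x', a, y') \<in> steps (rename_states h X) \<and> u' \<in> (map_prod h g ` b) `` {y'}"
    then obtain x y where xy: "x' = h x" "y' = h y" "(x, a, y) \<in> steps X"
      by (auto elim: steps_rename_statesE)
    with step h obtain u where u: "u' = g u" "u \<in> b `` {y}"
      by (auto simp: Image_map_prod)
    with sim xy(3) have "(u \<in> b `` {x} \<and> a = Tau) \<or> (\<exists>v \<in> b `` {x}. (v, a, u) \<in> steps Y) \<or>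
        (\<exists>v \<in> b `` {y}. (v, Tau, u) \<in> steps Y \<and> (n (Inl (x, a, y)) v, n (Inl (x, a, y)) u) \<in> lt)"
      unfolding normed_bwd_sim_def by blast
    then show "u' \<in> (map_prod h g ` b) `` {x'} \<and> a = Tau \<or>
      (\<exists>v \<in> (map_prod h g ` b) `` {x'}. (v, a, u') \<in> steps (rename_states g Y)) \<or>
      (\<exists>v \<in> (map_prod h g ` b) `` {y'}. (v, Tau, u') \<in> steps (rename_states g Y) \<and>
        (n' (Inl (x', a, y')) v, n' (Inl (x', a, y')) u') \<in> lt)"
    proof (elim disjE conjE bexE)
      fix v assume "v \<in> b `` {y}" "(v, Tau, u) \<in> steps Y"
        "(n (Inl (x, a, y)) v, n (Inl (x, a, y)) u) \<in> lt"
      then show ?thesis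
        by (intro disjI2 bexI[of _ "g v"] conjI)
          (simp_all add: n' map_prod_imageI steps_rename_statesI xy u)
    qed (use xy u in \<open>blast intro: steps_rename_statesI\<close>)+
  qed
  then show ?thesis by blast
qed

lemma image_finite_rename: "image_finite R \<Longrightarrow> inj h \<Longrightarrow> image_finite (map_prod h g ` R)"
  unfolding image_finite_def
proof
  fix z assume R: "\<forall>x. finite (R `` {x})" and h: "inj h"
  show "finite ((map_prod h g ` R) `` {z})"
  proof (cases "z \<in> range h")
    case True
    with R h show ?thesis by (auto simp: Image_map_prod)
  next
    case False
    then have "(map_prod h g ` R) `` {z} = {}" by auto
    then show ?thesis by simp
  qed
qed

lemma wf_strict_inv_image: "wf_strict lt \<Longrightarrow> wf_strict (inv_image lt f)"
  unfolding wf_strict_def by (simp add: wf_inv_image trans_inv_image)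

text \<open>In le_H and le_P the set of norm values is fixed to be the domain of the norm;
  every norm can be pulled back to it.\<close>
lemma le_H_intro:
  assumes "step_refinement B A r" "normed_fwd_sim A B (inv_rel r) n lt"
  shows "le_H A B"
  unfolding le_H_def
proof (intro exI conjI)
  show "normed_fwd_sim A B (inv_rel r) Pair (inv_image lt (case_prod n))"
    using assms(2) unfolding normed_fwd_sim_def by (auto simp: wf_strict_inv_image)
qed fact

lemma normed_bwd_sim_pullback:
  "normed_bwd_sim A B b n lt \<Longrightarrow> normed_bwd_sim A B b Pair (inv_image lt (case_prod n))"
  unfolding normed_bwd_sim_def by (auto simp: wf_strict_inv_image)

lemma le_P_intro:
  "step_refinement B A r \<Longrightarrow> normed_bwd_sim A B (inv_rel r) n lt \<Longrightarrow> le_P A B"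
  unfolding le_P_def by (blast dest: normed_bwd_sim_pullback)

lemma le_iP_intro:
  "step_refinement B A r \<Longrightarrow> normed_bwd_sim A B (inv_rel r) n lt \<Longrightarrow> image_finite (inv_rel r) \<Longrightarrow>
   le_iP A B"
  unfolding le_iP_def by (blast dest: normed_bwd_sim_pullback)

lemma le_H_rename:
  fixes A :: "('s, 'a) automaton" and C :: "('t, 'a) automaton"
  assumes "le_H A C" "inj h"
  shows "le_H A (rename_states h C)"
proof -
  obtain r lt and n :: "'s \<times> 'a act \<times> 's \<Rightarrow> 't \<Rightarrow> ('s \<times> 'a act \<times> 's) \<times> 't"
    where r: "step_refinement C A r" and sim: "normed_fwd_sim A C (inv_rel r) n lt"
    using assms(1) unfolding le_H_def by blast
  have "step_refinement (rename_states h C) A (rename_map h id r)"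
    using step_refinement_rename[OF r assms(2) inj_on_id] by simp
  moreover obtain n'
    where "normed_fwd_sim A (rename_states h C) (inv_rel (rename_map h id r)) n' lt"
    using normed_fwd_sim_rename[OF sim inj_on_id assms(2)]
    by (auto simp: inv_rel_rename_map[OF assms(2)])
  ultimately show ?thesis by (rule le_H_intro)
qed

lemma le_P_rename:
  fixes C :: "('s, 'a) automaton" and D :: "('t, 'a) automaton"
  assumes "le_P C D" "inj h" "inj g"
  shows "le_P (rename_states h C) (rename_states g D)"
proof -
  obtain r lt and n :: "('s \<times> 'a act \<times> 's) + 's \<Rightarrow> 't \<Rightarrow> (('s \<times> 'a act \<times> 's) + 's) \<times> 't"
    where r: "step_refinement D C r" and sim: "normed_bwd_sim C D (inv_rel r) n lt"
    using assms(1) unfolding le_P_def by blast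
  obtain n'
    where "normed_bwd_sim (rename_states h C) (rename_states g D) (inv_rel (rename_map g h r)) n' lt"
    using normed_bwd_sim_rename[OF sim assms(2,3)] by (auto simp: inv_rel_rename_map[OF assms(3)])
  with step_refinement_rename[OF r assms(3,2)] show ?thesis by (rule le_P_intro)
qed

lemma le_iP_rename:
  fixes C :: "('s, 'a) automaton" and D :: "('t, 'a) automaton"
  assumes "le_iP C D" "inj h" "inj g"
  shows "le_iP (rename_states h C) (rename_states g D)"
proof -
  obtain r lt and n :: "('s \<times> 'a act \<times> 's) + 's \<Rightarrow> 't \<Rightarrow> (('s \<times> 'a act \<times> 's) + 's) \<times> 't"
    where r: "step_refinement D C r" and sim: "normed_bwd_sim C D (inv_rel r) n lt"
    and fin: "image_finite (inv_rel r)"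
    using assms(1) unfolding le_iP_def by blast
  obtain n'
    where "normed_bwd_sim (rename_states h C) (rename_states g D) (inv_rel (rename_map g h r)) n' lt"
    using normed_bwd_sim_rename[OF sim assms(2,3)] by (auto simp: inv_rel_rename_map[OF assms(3)])
  moreover have "image_finite (inv_rel (rename_map g h r))"
    using image_finite_rename[OF fin assms(2)] by (simp add: inv_rel_rename_map[OF assms(3)])
  ultimately show ?thesis
    using step_refinement_rename[OF r assms(3,2)] by (blast intro: le_iP_intro)
qed

lemma le_R_rename: "le_R D B \<Longrightarrow> inj g \<Longrightarrow> le_R (rename_states g D) B"
  unfolding le_R_def using step_refinement_rename[of D B _ g id] by fastforce

section \<open>The history automaton and the synchronized product\<close>

definition history :: "('s, 'a) automaton \<Rightarrow> ('s \<times> 'a list, 'a) automaton" where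
  "history A = \<lparr>states = {(s, \<beta>). reachable A \<beta> s}, start = (\<lambda>s. (s, [])) ` start A, acts = acts A,
     steps = {((s, \<beta>), a, (t, \<beta> @ act_trace a)) | s \<beta> a t. reachable A \<beta> s \<and> (s, a, t) \<in> steps A}\<rparr>"

lemma history_simps [simp]:
  "states (history A) = {(s, \<beta>). reachable A \<beta> s}"
  "start (history A) = (\<lambda>s. (s, [])) ` start A"
  "acts (history A) = acts A"
  "steps (history A) =
     {((s, \<beta>), a, (t, \<beta> @ act_trace a)) | s \<beta> a t. reachable A \<beta> s \<and> (s, a, t) \<in> steps A}"
  by (simp_all add: history_def)

lemma is_automaton_history: "is_automaton A \<Longrightarrow> is_automaton (history A)"
  unfolding is_automaton_def by (auto intro: reachable.intros)

lemma le_H_history: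
  assumes "is_automaton A"
  shows "le_H A (history A)"
proof -
  let ?r = "projection (history A) fst"
  have "step_refinement (history A) A ?r"
    using assms by (intro step_refinement_projection is_automaton_history)
      (auto simp: reachable_in_states)
  moreover have "normed_fwd_sim A (history A) (inv_rel ?r) (\<lambda>_ _. ()) {}"
    unfolding normed_fwd_sim_def
  proof (intro conjI allI ballI impI)
    show "inv_rel ?r \<subseteq> states A \<times> states (history A)"
      using assms by (auto simp: inv_rel_projection_iff reachable_in_states)
    show "wf_strict ({} :: (unit \<times> unit) set)"
      by (simp add: wf_strict_def)
  next
    fix s assume "s \<in> start A"
    then have "(s, []) \<in> inv_rel ?r `` {s} \<inter> start (history A)"
      by (auto simp: inv_rel_projection_iff intro: reachable.start)
    then show "inv_rel ?r `` {s} \<inter> start (history A) \<noteq> {}"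
      by blast
  next
    fix s a t c assume "(s, a, t) \<in> steps A \<and> c \<in> inv_rel ?r `` {s}"
    then obtain \<beta> where "c = (s, \<beta>)" "reachable A \<beta> s" "(s, a, t) \<in> steps A"
      by (auto simp: inv_rel_projection_iff)
    then have "(t, \<beta> @ act_trace a) \<in> inv_rel ?r `` {t}"
      "(c, a, (t, \<beta> @ act_trace a)) \<in> steps (history A)"
      by (auto simp: inv_rel_projection_iff intro: reachable.step)
    then show "c \<in> inv_rel ?r `` {t} \<and> a = Tau \<or>
      (\<exists>c' \<in> inv_rel ?r `` {t}. (c, a, c') \<in> steps (history A)) \<or>
      (\<exists>c' \<in> inv_rel ?r `` {s}. (c, Tau, c') \<in> steps (history A) \<and> ((), ()) \<in> {})"
      by blast
  qed
  ultimately show ?thesis by (rule le_H_intro)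
qed

inductive sync_step ::
  "('s, 'a) automaton \<Rightarrow> ('t, 'a) automaton \<Rightarrow>
   ('s \<times> 'a list) \<times> 't \<Rightarrow> 'a act \<Rightarrow> ('s \<times> 'a list) \<times> 't \<Rightarrow> bool"
  for A B where
  left_tau: "(s, Tau, t) \<in> steps A \<Longrightarrow> sync_step A B ((s, \<beta>), u) Tau ((t, \<beta>), u)"
| joint: "(s, Ext x, t) \<in> steps A \<Longrightarrow> (u, Ext x, v) \<in> steps B \<Longrightarrow>
    sync_step A B ((s, \<beta>), u) (Ext x) ((t, \<beta> @ [x]), v)"
| right_tau: "(u, Tau, v) \<in> steps B \<Longrightarrow> sync_step A B ((s, \<beta>), u) Tau ((s, \<beta>), v)"

definition sync_states ::
  "('s, 'a) automaton \<Rightarrow> ('t, 'a) automaton \<Rightarrow> (('s \<times> 'a list) \<times> 't) set" where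
  "sync_states A B = {((s, \<beta>), u). reachable A \<beta> s \<and> reachable B \<beta> u}"

definition sync_product ::
  "('s, 'a) automaton \<Rightarrow> ('t, 'a) automaton \<Rightarrow> (('s \<times> 'a list) \<times> 't, 'a) automaton" where
  "sync_product A B = \<lparr>states = sync_states A B,
     start = {((s, []), u) | s u. s \<in> start A \<and> u \<in> start B}, acts = acts B,
     steps = {(d, a, d'). d \<in> sync_states A B \<and> sync_step A B d a d'}\<rparr>"

lemma sync_product_simps [simp]:
  "states (sync_product A B) = sync_states A B"
  "start (sync_product A B) = {((s, []), u) | s u. s \<in> start A \<and> u \<in> start B}"
  "acts (sync_product A B) = acts B"
  "steps (sync_product A B) = {(d, a, d'). d \<in> sync_states A B \<and> sync_step A B d a d'}"
  by (simp_all add: sync_product_def)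

lemma sync_step_sync_states:
  "sync_step A B d a d' \<Longrightarrow> d \<in> sync_states A B \<Longrightarrow> d' \<in> sync_states A B"
  by (induction rule: sync_step.induct)
    (auto simp: sync_states_def intro: reachable_tau reachable_ext)

lemma sync_step_acts: "sync_step A B d a d' \<Longrightarrow> is_automaton B \<Longrightarrow> a \<in> acts B"
  by (induction rule: sync_step.induct) (auto simp: is_automaton_def)

lemma is_automaton_sync_product:
  assumes "is_automaton A" "is_automaton B"
  shows "is_automaton (sync_product A B)"
  unfolding is_automaton_def
proof (intro conjI)
  show "start (sync_product A B) \<noteq> {}" "Tau \<in> acts (sync_product A B)"
    using assms by (auto simp: is_automaton_def)
  show "start (sync_product A B) \<subseteq> states (sync_product A B)"
    by (auto simp: sync_states_def intro: reachable.start)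
  show "steps (sync_product A B) \<subseteq>
      states (sync_product A B) \<times> acts (sync_product A B) \<times> states (sync_product A B)"
    using assms(2) by (auto intro: sync_step_sync_states sync_step_acts)
qed

lemma step_refinement_sync_history:
  assumes "is_automaton A" "is_automaton B"
  shows "step_refinement (sync_product A B) (history A) (projection (sync_product A B) fst)"
proof (rule step_refinement_projection)
  show "is_automaton (sync_product A B)" using assms by (rule is_automaton_sync_product)
  show "fst ` states (sync_product A B) \<subseteq> states (history A)"
       "fst ` start (sync_product A B) \<subseteq> start (history A)"
    by (auto simp: sync_states_def)
next
  fix d a d' assume "(d, a, d') \<in> steps (sync_product A B)"
  then have "sync_step A B d a d'" "d \<in> sync_states A B" by auto
  then show "(fst d = fst d' \<and> a = Tau) \<or> (fst d, a, fst d') \<in> steps (history A)"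
    by (induction rule: sync_step.induct) (force simp: sync_states_def)+
qed

lemma le_R_sync_product:
  assumes "is_automaton A" "is_automaton B"
  shows "le_R (sync_product A B) B"
  unfolding le_R_def
proof (rule exI, rule step_refinement_projection)
  show "is_automaton (sync_product A B)" using assms by (rule is_automaton_sync_product)
  show "snd ` states (sync_product A B) \<subseteq> states B"
       "snd ` start (sync_product A B) \<subseteq> start B"
    using assms(2) by (auto simp: sync_states_def reachable_in_states)
next
  fix d a d' assume "(d, a, d') \<in> steps (sync_product A B)"
  then have "sync_step A B d a d'" by simp
  then show "(snd d = snd d' \<and> a = Tau) \<or> (snd d, a, snd d') \<in> steps B"
    by (induction rule: sync_step.induct) auto
qed

lemma inv_rel_sync_projection:
  "((s, \<beta>), d) \<in> inv_rel (projection (sync_product A B) fst) \<longleftrightarrow>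
   (\<exists>u. d = ((s, \<beta>), u) \<and> reachable A \<beta> s \<and> reachable B \<beta> u)"
  by (auto simp: inv_rel_projection_iff sync_states_def)

lemma sync_product_tau_predecessor:
  assumes "reachable A \<beta> s" "reachable B \<beta> u" "u \<notin> entry_states B \<beta>"
  obtains v where "reachable B \<beta> v" "(((s, \<beta>), v), Tau, ((s, \<beta>), u)) \<in> steps (sync_product A B)"
    "tau_depth B \<beta> v < tau_depth B \<beta> u"
  using reachable_tau_predecessor[OF assms(2)] assms(1,3)
  by (auto simp: sync_states_def intro: sync_step.right_tau)

lemma normed_bwd_sim_sync_product:
  assumes "is_automaton A" "is_automaton B" "trace_incl A B"
  shows "normed_bwd_sim (history A) (sync_product A B) (inv_rel (projection (sync_product A B) fst))
     (\<lambda>_ ((s, \<beta>), u). tau_depth B \<beta> u) less_than"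
  (is "normed_bwd_sim _ _ ?b ?n _")
  unfolding normed_bwd_sim_def
proof (intro conjI allI ballI impI)
  show "?b \<subseteq> states (history A) \<times> states (sync_product A B)"
    by (auto simp: inv_rel_projection_iff sync_states_def)
  show "wf_strict less_than" by (simp add: wf_strict_def)
next
  fix c assume "c \<in> states (history A)"
  then obtain s \<beta> where c: "c = (s, \<beta>)" "reachable A \<beta> s" by auto
  then have "\<beta> \<in> traces_star B"
    using assms traces_star_iff_reachable unfolding trace_incl_def by blast
  then obtain u where "reachable B \<beta> u" using assms(2) traces_star_iff_reachable by blast
  with c have "(c, u) \<in> ?b `` {c}" by (simp add: inv_rel_sync_projection)
  then show "?b `` {c} \<noteq> {}" by blast
next
  fix c d assume "c \<in> start (history A)" "d \<in> ?b `` {c}"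
  then obtain s u where c: "c = (s, [])" "s \<in> start A" and d: "d = (c, u)" "reachable B [] u"
    by (auto simp: inv_rel_sync_projection)
  show "d \<in> start (sync_product A B) \<or> (\<exists>d' \<in> ?b `` {c}.
    (d', Tau, d) \<in> steps (sync_product A B) \<and> (?n (Inr c) d', ?n (Inr c) d) \<in> less_than)"
  proof (cases "u \<in> start B")
    case False
    with c d obtain v where "reachable B [] v" "((c, v), Tau, d) \<in> steps (sync_product A B)"
      "tau_depth B [] v < tau_depth B [] u"
      using sync_product_tau_predecessor[OF reachable.start[OF c(2)] d(2)] by auto
    with c d show ?thesis
      by (intro disjI2 bexI[of _ "(c, v)"]) (auto simp: inv_rel_sync_projection intro: reachable.start)
  qed (use c d in simp)
next
  fix c a c' d assume "(c, a, c') \<in> steps (history A) \<and> d \<in> ?b `` {c'}"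
  then obtain s \<beta> t u where c: "c = (s, \<beta>)" "c' = (t, \<beta> @ act_trace a)" "reachable A \<beta> s"
    "(s, a, t) \<in> steps A" and d: "d = (c', u)" "reachable B (\<beta> @ act_trace a) u"
    by (auto simp: inv_rel_sync_projection)
  show "(d \<in> ?b `` {c} \<and> a = Tau) \<or> (\<exists>d' \<in> ?b `` {c}. (d', a, d) \<in> steps (sync_product A B)) \<or>
    (\<exists>d' \<in> ?b `` {c'}. (d', Tau, d) \<in> steps (sync_product A B) \<and>
       (?n (Inl (c, a, c')) d', ?n (Inl (c, a, c')) d) \<in> less_than)"
  proof (cases a)
    case Tau
    with c d show ?thesis
      by (intro disjI2 disjI1 bexI[of _ "(c, u)"])
        (auto simp: inv_rel_sync_projection sync_states_def intro: sync_step.left_tau)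
  next
    case (Ext x)
    show ?thesis
    proof (cases "u \<in> entry_states B (\<beta> @ [x])")
      case True
      then obtain v where "reachable B \<beta> v" "(v, Ext x, u) \<in> steps B" by auto
      with c d Ext show ?thesis
        by (intro disjI2 disjI1 bexI[of _ "(c, v)"])
          (auto simp: inv_rel_sync_projection sync_states_def intro: sync_step.joint)
    next
      case False
      have "reachable A (\<beta> @ [x]) t" using c Ext by (blast intro: reachable_ext)
      with False c d Ext obtain v where "reachable B (\<beta> @ [x]) v"
        "((c', v), Tau, d) \<in> steps (sync_product A B)"
        "tau_depth B (\<beta> @ [x]) v < tau_depth B (\<beta> @ [x]) u"
        using sync_product_tau_predecessor[of A "\<beta> @ [x]" t B u] by auto
      with c d Ext show ?thesis
        by (intro disjI2 bexI[of _ "(c', v)"]) (auto simp: inv_rel_sync_projection intro: reachable_ext)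
    qed
  qed
qed

lemma image_finite_sync_projection:
  assumes "is_automaton B" "fin_invis_nondet B"
  shows "image_finite (inv_rel (projection (sync_product A B) fst))"
  unfolding image_finite_def
proof
  fix c
  have "inv_rel (projection (sync_product A B) fst) `` {c} \<subseteq> Pair c ` {u. reachable B (snd c) u}"
    by (cases c) (auto simp: inv_rel_sync_projection)
  moreover have "finite {u. reachable B (snd c) u}" using assms by (rule finite_reachable)
  ultimately show "finite (inv_rel (projection (sync_product A B) fst) `` {c})"
    by (meson finite_imageI finite_subset)
qed

lemma le_P_history_sync_product:
  assumes "is_automaton A" "is_automaton B" "trace_incl A B"
  shows "le_P (history A) (sync_product A B)"
  using step_refinement_sync_history[OF assms(1,2)] normed_bwd_sim_sync_product[OF assms]
  by (rule le_P_intro)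

lemma le_iP_history_sync_product:
  assumes "is_automaton A" "is_automaton B" "trace_incl A B" "fin_invis_nondet B"
  shows "le_iP (history A) (sync_product A B)"
  using step_refinement_sync_history[OF assms(1,2)] normed_bwd_sim_sync_product[OF assms(1-3)]
    image_finite_sync_projection[OF assms(2,4)]
  by (rule le_iP_intro)

text \<open>Only injectivity of the encodings matters.\<close>

definition encode_trace :: "'a list \<Rightarrow> ('sa + 'sb + 'a act + nat) list" where
  "encode_trace = map (\<lambda>x. Inr (Inr (Inl (Ext x))))"

definition encode_history_state :: "'sa \<times> 'a list \<Rightarrow> ('sa, 'sb, 'a) big_state" where
  "encode_history_state = (\<lambda>(s, \<beta>). {Inl s # encode_trace \<beta>})"

definition encode_sync_state :: "('sa \<times> 'a list) \<times> 'sb \<Rightarrow> ('sa, 'sb, 'a) big_state" where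
  "encode_sync_state = (\<lambda>((s, \<beta>), u). {Inl s # Inr (Inl u) # encode_trace \<beta>})"

lemma inj_encode_trace: "inj encode_trace"
  unfolding encode_trace_def by (auto intro: injI)

lemma inj_encode_history_state: "inj encode_history_state"
  by (auto intro!: injI simp: encode_history_state_def inj_encode_trace[THEN inj_eq])

lemma inj_encode_sync_state: "inj encode_sync_state"
  by (auto intro!: injI simp: encode_sync_state_def inj_encode_trace[THEN inj_eq])

theorem mainTheorem4:
  fixes A :: "('sa, 'a) automaton" and B :: "('sb, 'a) automaton"
  assumes "is_automaton A" and "is_automaton B" and "trace_incl A B"
  shows "(\<exists>(C :: (('sa, 'sb, 'a) big_state, 'a) automaton)
             (D :: (('sa, 'sb, 'a) big_state, 'a) automaton).
             is_automaton C \<and> is_automaton D \<and> le_H A C \<and> le_P C D \<and> le_R D B)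
       \<and> (fin_invis_nondet B \<longrightarrow>
          (\<exists>(C :: (('sa, 'sb, 'a) big_state, 'a) automaton)
             (D :: (('sa, 'sb, 'a) big_state, 'a) automaton).
             is_automaton C \<and> is_automaton D \<and> le_H A C \<and> le_iP C D \<and> le_R D B))"
proof -
  let ?C = "rename_states (encode_history_state :: _ \<Rightarrow> ('sa, 'sb, 'a) big_state) (history A)"
  let ?D = "rename_states (encode_sync_state :: _ \<Rightarrow> ('sa, 'sb, 'a) big_state) (sync_product A B)"
  have automata: "is_automaton ?C" "is_automaton ?D"
    using assms(1,2)
    by (simp_all add: is_automaton_rename_states is_automaton_history is_automaton_sync_product)
  have "le_H A ?C"
    using le_H_history[OF assms(1)] inj_encode_history_state by (rule le_H_rename)
  moreover have "le_P ?C ?D"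
    using le_P_history_sync_product[OF assms] inj_encode_history_state inj_encode_sync_state
    by (rule le_P_rename)
  moreover have "le_R ?D B"
    using le_R_sync_product[OF assms(1,2)] inj_encode_sync_state by (rule le_R_rename)
  moreover have "le_iP ?C ?D" if "fin_invis_nondet B"
    using le_iP_history_sync_product[OF assms that] inj_encode_history_state inj_encode_sync_state
    by (rule le_iP_rename)
  ultimately show ?thesis using automata by blast
qed

end
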